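(* (1) Let $I=(\mathcal{M},[N],(u_i)_{i\in[N]})$ be a non-negative instance. Then $\frac23\le\lambda^I\le\infty$, and $\lambda^I=\infty$ if and only if $MmS_{u_i}^N(\mathcal{M})=0$ for all $i\in[N]$. (2) Let $I=(\mathcal{M},[N],(d_i)_{i\in[N]})$ be a non-positive instance. Then $0\le\lambda^I\le2$, and $\lambda^I=0$ if $MmS_{d_i}^N(\mathcal{M})=0$ for some $i\in[N]$.
   Context: An instance: finite item set $\mathcal{M}$, agents $[N]=\{1,\dots,N\}$, additive utilities $v_i$, either all item values $\ge0$ (non-negative instance, goods) or all $\le0$ (non-positive instance, chores). $\Pi_N(\mathcal{M})$ is the set of ordered $N$-partitions of $\mathcal{M}$ (parts may be empty); $MmS_{v}^N(\mathcal{M}):=\max_{(S_1,\ldots,S_N)\in\Pi_N(\mathcal{M})}\min_{j} v(S_j)$. For $\lambda\in\mathbb{R}$, an allocation $S\in\Pi_N(\mathcal{M})$ solves the $\lambda$-max-min problem for the instance iff $v_i(S_i)\ge\lambda\cdot MmS_{v_i}^N(\mathcal{M})$ for all $i$. The optimal MmS ratio $\lambda^I$ is: for a non-negative instance, the maximal $\lambda\in[0,\infty]$ for which the $\lambda$-max-min problem has a solution (with $\lambda^I=\infty$ meaning a solution exists for every real $\lambda$); for a non-positive instance, the minimal $\lambda\in[0,\infty)$ for which the $\lambda$-max-min problem has a solution. *)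

theory Defs
  imports Complex_Main "HOL-Library.Extended_Real"
begin

text \<open>An ordered N-partition of M is a map S :: nat => 'a set whose parts S 1, ..., S N
are pairwise disjoint with union M (parts may be empty); outside 1..N the map is
normalised to the empty set.\<close>

definition partitions :: "nat \<Rightarrow> 'a set \<Rightarrow> (nat \<Rightarrow> 'a set) set" where
  "partitions N M = {S.
     (\<forall>j\<in>{1..N}. \<forall>k\<in>{1..N}. j \<noteq> k \<longrightarrow> S j \<inter> S k = {}) \<and>
     (\<Union>j\<in>{1..N}. S j) = M \<and>
     (\<forall>j. j \<notin> {1..N} \<longrightarrow> S j = {})}"

definition MmS :: "('a \<Rightarrow> real) \<Rightarrow> nat \<Rightarrow> 'a set \<Rightarrow> real" where
  "MmS v N M = Max ((\<lambda>S. Min ((\<lambda>j. sum v (S j)) ` {1..N})) ` partitions N M)"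

definition solves_max_min ::
    "real \<Rightarrow> 'a set \<Rightarrow> nat \<Rightarrow> (nat \<Rightarrow> 'a \<Rightarrow> real) \<Rightarrow> (nat \<Rightarrow> 'a set) \<Rightarrow> bool" where
  "solves_max_min l M N u S \<longleftrightarrow>
     S \<in> partitions N M \<and> (\<forall>i\<in>{1..N}. sum (u i) (S i) \<ge> l * MmS (u i) N M)"

definition max_min_solvable :: "real \<Rightarrow> 'a set \<Rightarrow> nat \<Rightarrow> (nat \<Rightarrow> 'a \<Rightarrow> real) \<Rightarrow> bool" where
  "max_min_solvable l M N u \<longleftrightarrow> (\<exists>S. solves_max_min l M N u S)"

definition nonneg_instance :: "'a set \<Rightarrow> nat \<Rightarrow> (nat \<Rightarrow> 'a \<Rightarrow> real) \<Rightarrow> bool" where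
  "nonneg_instance M N u \<longleftrightarrow> (\<forall>i\<in>{1..N}. \<forall>x\<in>M. u i x \<ge> 0)"

definition nonpos_instance :: "'a set \<Rightarrow> nat \<Rightarrow> (nat \<Rightarrow> 'a \<Rightarrow> real) \<Rightarrow> bool" where
  "nonpos_instance M N u \<longleftrightarrow> (\<forall>i\<in>{1..N}. \<forall>x\<in>M. u i x \<le> 0)"

definition opt_ratio_nonneg :: "'a set \<Rightarrow> nat \<Rightarrow> (nat \<Rightarrow> 'a \<Rightarrow> real) \<Rightarrow> ereal" where
  "opt_ratio_nonneg M N u = (GREATEST l::ereal. 0 \<le> l \<and>
      (l = \<infinity> \<longrightarrow> (\<forall>r. max_min_solvable r M N u)) \<and>
      (l \<noteq> \<infinity> \<longrightarrow> max_min_solvable (real_of_ereal l) M N u))"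

definition opt_ratio_nonpos :: "'a set \<Rightarrow> nat \<Rightarrow> (nat \<Rightarrow> 'a \<Rightarrow> real) \<Rightarrow> real" where
  "opt_ratio_nonpos M N d = (LEAST l::real. 0 \<le> l \<and> max_min_solvable l M N d)"

end

theory Submission
  imports Defs "HOL-Library.FuncSet" "HOL-Library.Disjoint_Sets"
begin

(* As observed by Bouveret and Lemaitre, it suffices to treat ordered instances, where
   all agents rank the items alike: an allocation of the positions 0, ..., m-1 of the rankings
   becomes an allocation of the items through the picking sequence in which the owner of
   position a takes its favourite remaining item, which is worth at least its a-th best item.
   On an ordered instance with k agents every agent keeps k disjoint bundles worth its maximin
   share mu.  A single item worth 2/3 mu to somebody, or the k-th and (k+1)-st best items if
   together they are worth 2/3 mu to somebody, can be handed out: every other agent loses at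
   most one bundle after exchanging items among the k+1 best ones.  When neither is possible,
   all items are worth less than 2/3 mu and all but the k best less than 1/3 mu, and bag
   filling (one large item plus small items until the bag is worth 2/3 mu to somebody) gives
   nobody else more than mu.  No item costs more than the maximin share and all items together at most N times
   it, so handing out minimal bags that are too expensive for everybody costs the receiver at
   most twice its share.
   The solvable ratios form a finite union of half-lines, one for each partition, hence the
   optimal ratio is attained. *)

section \<open>Allocations and maximin shares\<close>

lemma real_card_Diff_singleton:
  "finite A \<Longrightarrow> i \<in> A \<Longrightarrow> real (card (A - {i})) = real (card A) - 1"
  using card_Suc_Diff1[of A i] by simp

definition allocation :: "(nat \<Rightarrow> 'b set) \<Rightarrow> nat set \<Rightarrow> 'b set \<Rightarrow> bool" where
  "allocation f A R \<longleftrightarrow> disjoint_family_on f A \<and> (\<Union>i\<in>A. f i) = R"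

lemma allocation_subset: "allocation f A R \<Longrightarrow> i \<in> A \<Longrightarrow> f i \<subseteq> R"
  unfolding allocation_def by blast

lemma allocation_disjoint: "allocation f A R \<Longrightarrow> i \<in> A \<Longrightarrow> j \<in> A \<Longrightarrow> i \<noteq> j \<Longrightarrow> f i \<inter> f j = {}"
  unfolding allocation_def disjoint_family_on_def by blast

lemma sum_allocation:
  assumes "allocation f A R" "finite A" "finite R"
  shows "sum v R = (\<Sum>i\<in>A. sum v (f i))"
  using assms sum.UNION_disjoint_family[of A f v]
  by (auto simp: allocation_def intro: finite_subset)

lemma allocation_fun_upd:
  assumes "allocation f A R" "i \<notin> A" "B \<inter> R = {}"
  shows "allocation (f(i := B)) (insert i A) (B \<union> R)"
  using assms unfolding allocation_def disjoint_family_on_def by (auto simp: fun_upd_def)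

lemma allocation_image:
  assumes "allocation f A R" "inj_on p R"
  shows "allocation (\<lambda>i. p ` f i) A (p ` R)"
  unfolding allocation_def
proof
  show "disjoint_family_on (\<lambda>i. p ` f i) A"
    unfolding disjoint_family_on_def
  proof (intro ballI impI)
    fix i j assume ij: "i \<in> A" "j \<in> A" "i \<noteq> j"
    have "p ` (f i \<inter> f j) = p ` f i \<inter> p ` f j"
      using inj_on_image_Int[OF assms(2) allocation_subset[OF assms(1) ij(1)] allocation_subset[OF assms(1) ij(2)]] .
    then show "p ` f i \<inter> p ` f j = {}"
      using allocation_disjoint[OF assms(1) ij] by (metis image_empty)
  qed
  show "(\<Union>i\<in>A. p ` f i) = p ` R"
    using assms(1) unfolding allocation_def by blast
qed

lemma allocation_owner:
  assumes "allocation f A R"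
  obtains owner where "\<And>x. x \<in> R \<Longrightarrow> owner x \<in> A \<and> x \<in> f (owner x)"
    and "\<And>i x. i \<in> A \<Longrightarrow> x \<in> f i \<Longrightarrow> owner x = i"
proof
  define owner where "owner x = (THE i. i \<in> A \<and> x \<in> f i)" for x
  show owner_eq: "owner x = i" if "i \<in> A" "x \<in> f i" for i x
    unfolding owner_def
  proof (rule the_equality)
    fix j assume "j \<in> A \<and> x \<in> f j"
    then show "j = i"
      using allocation_disjoint[OF assms, of i j] that by blast
  qed (use that in simp)
  show "owner x \<in> A \<and> x \<in> f (owner x)" if x: "x \<in> R" for x
  proof -
    obtain i where "i \<in> A" "x \<in> f i"
      using assms x unfolding allocation_def by blast
    then show ?thesis
      using owner_eq by simp
  qed
qed

lemma partitions_eq_allocation: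
  "partitions N M = {S. allocation S {1..N} M \<and> (\<forall>j. j \<notin> {1..N} \<longrightarrow> S j = {})}"
  unfolding partitions_def allocation_def disjoint_family_on_def by blast

lemma allocation_in_partitions:
  "allocation f {1..N} M \<Longrightarrow> (\<lambda>j. if j \<in> {1..N} then f j else {}) \<in> partitions N M"
  unfolding partitions_eq_allocation allocation_def disjoint_family_on_def by auto

lemma greedy_allocation:
  assumes "finite A" "A \<noteq> {}" "P A R"
    and single: "\<And>i R. P {i} R \<Longrightarrow> good i R"
    and step: "\<And>A R. P A R \<Longrightarrow> finite A \<Longrightarrow> 2 \<le> card A \<Longrightarrow>
                 \<exists>i\<in>A. \<exists>B\<subseteq>R. good i B \<and> P (A - {i}) (R - B)"
  shows "\<exists>f. allocation f A R \<and> (\<forall>i\<in>A. good i (f i))"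
  using assms(1-3)
proof (induction A arbitrary: R rule: finite_psubset_induct)
  case (psubset A)
  show ?case
  proof (cases "2 \<le> card A")
    case False
    have "card A = 1"
      using False psubset.hyps psubset.prems(1) card_gt_0_iff[of A] by linarith
    then obtain i where "A = {i}"
      by (rule card_1_singletonE)
    moreover have "allocation (\<lambda>_. R) {i} R"
      by (simp add: allocation_def disjoint_family_on_def)
    moreover have "good i R"
      using single psubset.prems(2) \<open>A = {i}\<close> by simp
    ultimately show ?thesis
      by auto
  next
    case True
    then obtain i B where i: "i \<in> A" and B: "B \<subseteq> R" "good i B" "P (A - {i}) (R - B)"
      using step[OF psubset.prems(2) psubset.hyps] by blast
    have "A \<noteq> {i}"
      using True by auto
    then have "A - {i} \<noteq> {}"
      using i by blast
    then obtain f where f: "allocation f (A - {i}) (R - B)" "\<forall>j\<in>A - {i}. good j (f j)"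
      using psubset.IH[of "A - {i}" "R - B"] i B(3) by blast
    have "allocation (f(i := B)) (insert i (A - {i})) (B \<union> (R - B))"
      by (rule allocation_fun_upd[OF f(1)]) auto
    moreover have "insert i (A - {i}) = A" "B \<union> (R - B) = R"
      using i B(1) by auto
    ultimately have "allocation (f(i := B)) A R"
      by simp
    moreover have "\<forall>j\<in>A. good j ((f(i := B)) j)"
      using f(2) B(2) by simp
    ultimately show ?thesis
      by blast
  qed
qed

lemma finite_partitions:
  assumes "finite M"
  shows "finite (partitions N M)"
proof -
  let ?extend = "\<lambda>f j. if j \<in> {1..N} then f j else {}"
  have "partitions N M \<subseteq> ?extend ` (PiE {1..N} (\<lambda>_. Pow M))"
  proof
    fix S assume S: "S \<in> partitions N M"
    then have "S = ?extend (restrict S {1..N})" "restrict S {1..N} \<in> PiE {1..N} (\<lambda>_. Pow M)"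
      unfolding partitions_def by (auto simp: fun_eq_iff)
    then show "S \<in> ?extend ` (PiE {1..N} (\<lambda>_. Pow M))"
      by blast
  qed
  moreover have "finite (PiE {1..N} (\<lambda>_. Pow M))"
    using assms by (intro finite_PiE) auto
  ultimately show ?thesis
    by (meson finite_imageI finite_subset)
qed

lemma all_to_one_in_partitions:
  "i \<in> {1..N} \<Longrightarrow> (\<lambda>j. if j = i then M else {}) \<in> partitions N M"
  unfolding partitions_def by auto

lemma partitions_allocation: "S \<in> partitions N M \<Longrightarrow> allocation S {1..N} M"
  unfolding partitions_eq_allocation by blast

lemma partitions_subset: "S \<in> partitions N M \<Longrightarrow> S j \<subseteq> M"
  unfolding partitions_def by (cases "j \<in> {1..N}") auto

lemma MmS_attained:
  assumes "finite M" "N \<ge> 1"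
  obtains S where "S \<in> partitions N M" "MmS v N M = Min ((\<lambda>j. sum v (S j)) ` {1..N})"
proof -
  have "MmS v N M \<in> (\<lambda>S. Min ((\<lambda>j. sum v (S j)) ` {1..N})) ` partitions N M"
    unfolding MmS_def
    using finite_partitions[OF assms(1)] all_to_one_in_partitions[of 1 N M] assms(2)
    by (intro Max_in) auto
  then show ?thesis
    using that by blast
qed

lemma MmS_le_bundles:
  assumes "finite M" "N \<ge> 1"
  obtains S where "S \<in> partitions N M" "\<And>j. j \<in> {1..N} \<Longrightarrow> MmS v N M \<le> sum v (S j)"
proof -
  obtain S where "S \<in> partitions N M" "MmS v N M = Min ((\<lambda>j. sum v (S j)) ` {1..N})"
    by (rule MmS_attained[OF assms])
  then show ?thesis
    using that by simp
qed

lemma MmS_nonneg: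
  assumes "finite M" "N \<ge> 1" "\<And>x. x \<in> M \<Longrightarrow> 0 \<le> v x"
  shows "0 \<le> MmS v N M"
proof -
  obtain S where S: "S \<in> partitions N M" "MmS v N M = Min ((\<lambda>j. sum v (S j)) ` {1..N})"
    by (rule MmS_attained[OF assms(1,2)])
  have "0 \<le> sum v (S j)" for j
    using assms(3) partitions_subset[OF S(1)] by (meson subsetD sum_nonneg)
  then show ?thesis
    using S(2) assms(2) by simp
qed

lemma MmS_nonpos:
  assumes "finite M" "N \<ge> 1" "\<And>x. x \<in> M \<Longrightarrow> v x \<le> 0"
  shows "MmS v N M \<le> 0"
proof -
  obtain S where S: "S \<in> partitions N M" "\<And>j. j \<in> {1..N} \<Longrightarrow> MmS v N M \<le> sum v (S j)"
    using MmS_le_bundles[OF assms(1,2), of v] by blast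
  have "sum v (S 1) \<le> 0"
    using assms(3) partitions_subset[OF S(1)] by (meson subsetD sum_nonpos)
  then show ?thesis
    using S(2)[of 1] assms(2) by simp
qed

lemma MmS_le_average:
  assumes "finite M" "N \<ge> 1"
  shows "real N * MmS v N M \<le> sum v M"
proof -
  obtain S where S: "S \<in> partitions N M" "\<And>j. j \<in> {1..N} \<Longrightarrow> MmS v N M \<le> sum v (S j)"
    using MmS_le_bundles[OF assms, of v] by blast
  have "real N * MmS v N M = (\<Sum>j\<in>{1..N}. MmS v N M)"
    by simp
  also have "\<dots> \<le> (\<Sum>j\<in>{1..N}. sum v (S j))"
    using S(2) by (intro sum_mono)
  also have "\<dots> = sum v M"
    by (simp add: sum_allocation[OF partitions_allocation[OF S(1)] finite_atLeastAtMost assms(1)])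
  finally show ?thesis .
qed

lemma MmS_le_item:
  assumes "finite M" "N \<ge> 1" "\<And>y. y \<in> M \<Longrightarrow> v y \<le> 0" "x \<in> M"
  shows "MmS v N M \<le> v x"
proof -
  obtain S where S: "S \<in> partitions N M" "\<And>j. j \<in> {1..N} \<Longrightarrow> MmS v N M \<le> sum v (S j)"
    using MmS_le_bundles[OF assms(1,2), of v] by blast
  obtain j where j: "j \<in> {1..N}" "x \<in> S j"
    using S(1) assms(4) unfolding partitions_def by blast
  have "finite (S j)"
    using partitions_subset[OF S(1)] assms(1) by (rule finite_subset)
  then have "sum v (S j) = v x + sum v (S j - {x})"
    using j(2) by (simp add: sum.remove)
  moreover have "sum v (S j - {x}) \<le> 0"
    using assms(3) partitions_subset[OF S(1)] by (intro sum_nonpos) blast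
  ultimately show ?thesis
    using S(2)[OF j(1)] by simp
qed

section \<open>Disjoint bundles\<close>

definition disjoint_bundles :: "('b \<Rightarrow> real) \<Rightarrow> real \<Rightarrow> nat \<Rightarrow> 'b set \<Rightarrow> bool" where
  "disjoint_bundles v \<mu> k R \<longleftrightarrow>
     (\<exists>(I :: nat set) (P :: nat \<Rightarrow> 'b set). finite I \<and> card I = k \<and> disjoint_family_on P I \<and>
        (\<forall>l\<in>I. P l \<subseteq> R \<and> \<mu> \<le> sum v (P l)))"

lemma MmS_disjoint_bundles:
  assumes "finite M" "N \<ge> 1"
  shows "disjoint_bundles v (MmS v N M) N M"
proof -
  obtain S where S: "S \<in> partitions N M" "\<And>j. j \<in> {1..N} \<Longrightarrow> MmS v N M \<le> sum v (S j)"
    using MmS_le_bundles[OF assms, of v] by blast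
  have "disjoint_family_on S {1..N}"
    using partitions_allocation[OF S(1)] unfolding allocation_def by blast
  moreover have "\<forall>l\<in>{1..N}. S l \<subseteq> M \<and> MmS v N M \<le> sum v (S l)"
    using S partitions_subset by blast
  ultimately show ?thesis
    unfolding disjoint_bundles_def by (intro exI[of _ "{1..N}"] exI[of _ S] conjI) simp_all
qed

lemma disjoint_bundles_bij_betw:
  assumes bij: "bij_betw \<sigma> X Y" and "disjoint_bundles v \<mu> k Y"
  shows "disjoint_bundles (v \<circ> \<sigma>) \<mu> k X"
proof -
  obtain I :: "nat set" and P where I: "finite I" "card I = k" "disjoint_family_on P I"
    and P: "\<And>l. l \<in> I \<Longrightarrow> P l \<subseteq> Y \<and> \<mu> \<le> sum v (P l)"
    using assms(2) unfolding disjoint_bundles_def by blast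
  define Q where "Q l = X \<inter> \<sigma> -` P l" for l
  have "sum (v \<circ> \<sigma>) (Q l) = sum v (P l)" if l: "l \<in> I" for l
  proof -
    have "inj_on \<sigma> (Q l)"
      using bij unfolding bij_betw_def Q_def by (auto intro: inj_on_subset)
    moreover have "\<sigma> ` Q l = P l"
      using bij P[OF l] unfolding bij_betw_def Q_def by auto
    ultimately show ?thesis
      by (metis sum.reindex)
  qed
  moreover have "disjoint_family_on Q I"
    using I(3) unfolding Q_def disjoint_family_on_def by blast
  ultimately show ?thesis
    unfolding disjoint_bundles_def using I(1,2) P
    by (intro exI[of _ I] exI[of _ Q]) (auto simp: Q_def)
qed

lemma disjoint_bundles_sum_le:
  assumes "finite R" "\<And>x. x \<in> R \<Longrightarrow> 0 \<le> v x" "disjoint_bundles v \<mu> k R"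
  shows "real k * \<mu> \<le> sum v R"
proof -
  obtain I :: "nat set" and P where I: "finite I" "card I = k" "disjoint_family_on P I"
    and P: "\<And>l. l \<in> I \<Longrightarrow> P l \<subseteq> R \<and> \<mu> \<le> sum v (P l)"
    using assms(3) unfolding disjoint_bundles_def by blast
  have "real k * \<mu> = (\<Sum>l\<in>I. \<mu>)"
    using I(2) by simp
  also have "\<dots> \<le> (\<Sum>l\<in>I. sum v (P l))"
    using P by (intro sum_mono) auto
  also have "\<dots> = sum v (\<Union>l\<in>I. P l)"
    using I P assms(1) by (intro sum.UNION_disjoint_family[symmetric]) (auto intro: finite_subset)
  also have "\<dots> \<le> sum v R"
    using P assms(1,2) by (intro sum_mono2) auto
  finally show ?thesis .
qed

lemma pigeonhole_disjoint_family:
  assumes "finite C" "finite I" "I \<noteq> {}" "disjoint_family_on P I" "card I * b < card C"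
  shows "\<exists>D\<in>I. b < card (C - (\<Union>l\<in>I - {D}. P l))"
proof (rule ccontr)
  assume "\<not> ?thesis"
  then have small: "card (C - (\<Union>l\<in>I - {D}. P l)) \<le> b" if "D \<in> I" for D
    using that by (simp add: not_less)
  define U where "U = (\<Union>l\<in>I. P l)"
  have bound: "card (C \<inter> P D) + card (C - U) \<le> b" if D: "D \<in> I" for D
  proof -
    have "(C \<inter> P D) \<union> (C - U) \<subseteq> C - (\<Union>l\<in>I - {D}. P l)"
      using assms(4) D unfolding U_def disjoint_family_on_def by blast
    then have "card ((C \<inter> P D) \<union> (C - U)) \<le> b"
      using small[OF D] assms(1) by (meson card_mono finite_Diff le_trans)
    moreover have "card ((C \<inter> P D) \<union> (C - U)) = card (C \<inter> P D) + card (C - U)"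
      using assms(1) D unfolding U_def by (intro card_Un_disjoint) auto
    ultimately show ?thesis
      by simp
  qed
  have "C \<inter> U = (\<Union>D\<in>I. C \<inter> P D)"
    unfolding U_def by blast
  moreover have "card (\<Union>D\<in>I. C \<inter> P D) = (\<Sum>D\<in>I. card (C \<inter> P D))"
    using assms(1,2,4) by (intro card_UN_disjoint') (auto simp: disjoint_family_on_def)
  ultimately have "card (C \<inter> U) + card I * card (C - U) = (\<Sum>D\<in>I. card (C \<inter> P D) + card (C - U))"
    by (simp add: sum.distrib)
  also have "\<dots> \<le> card I * b"
    using sum_mono[of I _ "\<lambda>_. b"] bound by simp
  finally have "card (C \<inter> U) + card I * card (C - U) \<le> card I * b" .
  moreover have "card (C - U) \<le> card I * card (C - U)"
    using assms(2,3) by (simp add: Suc_le_eq card_gt_0_iff)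
  moreover have "card C = card (C \<inter> U) + card (C - U)"
    using assms(1) by (rule card_Int_Diff)
  ultimately show False
    using assms(5) by linarith
qed

lemma sum_le_exchange:
  fixes v :: "'b \<Rightarrow> real"
  assumes "finite P" "inj_on \<rho> (B \<inter> P)" "\<rho> ` (B \<inter> P) \<inter> P = {}"
    and "\<And>b. b \<in> B \<inter> P \<Longrightarrow> v b \<le> v (\<rho> b)"
  shows "sum v P \<le> sum v ((P - B) \<union> \<rho> ` (B \<inter> P))"
proof -
  have "sum v P = sum v (P - B) + sum v (B \<inter> P)"
    using assms(1) by (metis Int_commute add.commute sum.Int_Diff)
  also have "sum v (B \<inter> P) \<le> sum (v \<circ> \<rho>) (B \<inter> P)"
    by (rule sum_mono) (simp add: assms(4))
  also have "\<dots> = sum v (\<rho> ` (B \<inter> P))"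
    using assms(2) by (simp add: sum.reindex)
  also have "sum v (P - B) + \<dots> = sum v ((P - B) \<union> \<rho> ` (B \<inter> P))"
    using assms(1,3) by (intro sum.union_disjoint[symmetric]) auto
  finally show ?thesis
    by simp
qed

lemma disjoint_bundles_exchange:
  fixes I :: "nat set"
  assumes "finite R" "finite I" "disjoint_family_on P I" "\<And>l. l \<in> I \<Longrightarrow> P l \<subseteq> R \<and> \<mu> \<le> sum v (P l)"
    and "C \<subseteq> R" "inj_on \<rho> (B \<inter> (\<Union>l\<in>I. P l))" "\<rho> ` (B \<inter> (\<Union>l\<in>I. P l)) \<subseteq> C - B - (\<Union>l\<in>I. P l)"
    and "\<And>b. b \<in> B \<inter> (\<Union>l\<in>I. P l) \<Longrightarrow> v b \<le> v (\<rho> b)"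
  shows "disjoint_bundles v \<mu> (card I) (R - B)"
proof -
  define Q where "Q l = (P l - B) \<union> \<rho> ` (B \<inter> P l)" for l
  have "disjoint_family_on Q I"
    unfolding disjoint_family_on_def
  proof (intro ballI impI)
    fix l l' assume l: "l \<in> I" "l' \<in> I" "l \<noteq> l'"
    then have "P l \<inter> P l' = {}"
      using assms(3) by (auto simp: disjoint_family_on_def)
    moreover have "\<rho> ` (B \<inter> P l) \<inter> \<rho> ` (B \<inter> P l') = \<rho> ` (B \<inter> P l \<inter> (B \<inter> P l'))"
      using assms(6) l by (intro inj_on_image_Int[symmetric, of _ "B \<inter> (\<Union>l\<in>I. P l)"]) auto
    ultimately show "Q l \<inter> Q l' = {}"
      unfolding Q_def using assms(7) l by blast
  qed
  moreover have "Q l \<subseteq> R - B \<and> \<mu> \<le> sum v (Q l)" if l: "l \<in> I" for l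
  proof
    show "Q l \<subseteq> R - B"
      unfolding Q_def using assms(4,5,7) l by blast
    have "\<mu> \<le> sum v (P l)"
      using assms(4) l by blast
    also have "\<dots> \<le> sum v (Q l)"
      unfolding Q_def
    proof (rule sum_le_exchange)
      show "finite (P l)"
        using assms(1,4) l finite_subset by blast
      show "inj_on \<rho> (B \<inter> P l)"
        using inj_on_subset[OF assms(6), of "B \<inter> P l"] l by blast
      show "\<rho> ` (B \<inter> P l) \<inter> P l = {}"
        using assms(7) l by blast
      show "v b \<le> v (\<rho> b)" if "b \<in> B \<inter> P l" for b
        using assms(8) that l by blast
    qed
    finally show "\<mu> \<le> sum v (Q l)" .
  qed
  ultimately show ?thesis
    unfolding disjoint_bundles_def using assms(2) by blast
qed

lemma disjoint_bundles_remove: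
  assumes "finite R" "disjoint_bundles v \<mu> (Suc k) R" "B \<subseteq> C" "C \<subseteq> R"
    and "Suc k * (card B - 1) < card C"
    and more_valuable: "\<And>a b. a \<in> C - B \<Longrightarrow> b \<in> B \<Longrightarrow> v b \<le> v a"
  shows "disjoint_bundles v \<mu> k (R - B)"
proof -
  obtain I :: "nat set" and P where I: "finite I" "card I = Suc k" "disjoint_family_on P I"
    and P: "\<And>l. l \<in> I \<Longrightarrow> P l \<subseteq> R \<and> \<mu> \<le> sum v (P l)"
    using assms(2) unfolding disjoint_bundles_def by blast
  have fin: "finite C" "finite B"
    using assms(1,3,4) by (auto intro: finite_subset)
  (* Drop a bundle D meeting C often enough; the items of B in the other bundles are then
     replaced by items of C - B outside them. *)
  obtain D where D: "D \<in> I" "card B - 1 < card (C - (\<Union>l\<in>I - {D}. P l))"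
    using pigeonhole_disjoint_family[OF fin(1) I(1) _ I(3)] I(2) assms(5) by force
  define U where "U = (\<Union>l\<in>I - {D}. P l)"
  have "card (B \<inter> U) \<le> card ((C - B) - U)"
  proof -
    have "card B = card (B \<inter> U) + card (B - U)"
      using fin(2) by (rule card_Int_Diff)
    moreover have "card (C - U) = card ((C - B) - U) + card (B - U)"
    proof -
      have "C - U = ((C - B) - U) \<union> (B - U)"
        using assms(3) by blast
      moreover have "card (((C - B) - U) \<union> (B - U)) = card ((C - B) - U) + card (B - U)"
        using fin by (intro card_Un_disjoint) auto
      ultimately show ?thesis
        by simp
    qed
    ultimately show ?thesis
      using D(2) unfolding U_def by linarith
  qed
  then obtain \<rho> where "\<rho> ` (B \<inter> U) \<subseteq> (C - B) - U" "inj_on \<rho> (B \<inter> U)"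
    using card_le_inj[of "B \<inter> U" "(C - B) - U"] fin by auto
  moreover have "v b \<le> v (\<rho> b)" if "b \<in> B \<inter> U" for b
    using that calculation(1) more_valuable by blast
  ultimately have "disjoint_bundles v \<mu> (card (I - {D})) (R - B)"
    unfolding U_def using I P assms(1,4)
    by (intro disjoint_bundles_exchange[of R "I - {D}" P]) (auto simp: disjoint_family_on_def)
  then show ?thesis
    using I(1,2) D(1) by simp
qed

section \<open>Ordered instances of goods\<close>

definition goods_bag_filling_instance ::
    "(nat \<Rightarrow> 'b \<Rightarrow> real) \<Rightarrow> (nat \<Rightarrow> real) \<Rightarrow> nat set \<Rightarrow> 'b set \<Rightarrow> 'b set \<Rightarrow> bool" where
  "goods_bag_filling_instance w \<mu> A S R \<longleftrightarrow> finite R \<and> S \<subseteq> R \<and> card S \<le> card A \<and>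
     (\<forall>j\<in>A. 0 \<le> \<mu> j \<and> real (card A) * \<mu> j \<le> sum (w j) R \<and>
        (\<forall>x\<in>R. 0 \<le> w j x \<and> 3 * w j x < 2 * \<mu> j) \<and> (\<forall>x\<in>R - S. 3 * w j x < \<mu> j))"

lemma goods_bag_filling_instance_remove:
  assumes inst: "goods_bag_filling_instance w \<mu> A S R" and "finite A" "i \<in> A" "B \<subseteq> R"
    and "card (S - B) < card A" "\<And>j. j \<in> A \<Longrightarrow> sum (w j) B \<le> \<mu> j"
  shows "goods_bag_filling_instance w \<mu> (A - {i}) (S - B) (R - B)"
proof -
  have "real (card (A - {i})) * \<mu> j \<le> sum (w j) (R - B)" if j: "j \<in> A" for j
  proof -
    have "real (card (A - {i})) * \<mu> j = real (card A) * \<mu> j - \<mu> j"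
      unfolding real_card_Diff_singleton[OF assms(2,3)] by (simp add: left_diff_distrib)
    also have "\<dots> \<le> sum (w j) R - sum (w j) B"
      using inst assms(6)[OF j] j unfolding goods_bag_filling_instance_def by force
    also have "\<dots> = sum (w j) (R - B)"
      using inst assms(4) unfolding goods_bag_filling_instance_def by (simp add: sum_diff)
    finally show ?thesis .
  qed
  then show ?thesis
    using inst assms(3,5) unfolding goods_bag_filling_instance_def by auto
qed

lemma goods_bag_filling_first_bag:
  assumes inst: "goods_bag_filling_instance w \<mu> A S R" and "j \<in> A"
    and "X \<subseteq> S" "card (S - X) < card A"
  shows "2 * \<mu> j \<le> 3 * sum (w j) (X \<union> (R - S))"
proof -
  have R: "finite R" "S \<subseteq> R"
    and w: "0 \<le> \<mu> j" "real (card A) * \<mu> j \<le> sum (w j) R" "\<And>x. x \<in> R \<Longrightarrow> 3 * w j x < 2 * \<mu> j"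
    using inst assms(2) unfolding goods_bag_filling_instance_def by auto
  have "sum (w j) ((X \<union> (R - S)) \<union> (S - X)) = sum (w j) (X \<union> (R - S)) + sum (w j) (S - X)"
    using R assms(3) by (intro sum.union_disjoint) (auto intro: finite_subset)
  moreover have "(X \<union> (R - S)) \<union> (S - X) = R"
    using R(2) assms(3) by blast
  moreover have "w j x \<le> 2 * \<mu> j / 3" if "x \<in> S - X" for x
    using w(3)[of x] that R(2) by auto
  then have "sum (w j) (S - X) \<le> real (card (S - X)) * (2 * \<mu> j / 3)"
    by (rule sum_bounded_above)
  moreover have "real (card (S - X)) * \<mu> j \<le> (real (card A) - 1) * \<mu> j"
    using assms(4) w(1) by (intro mult_right_mono) auto
  moreover have "0 \<le> real (card A) * \<mu> j"
    using w(1) by simp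
  ultimately show ?thesis
    using w(2) by (simp add: left_diff_distrib)
qed

lemma goods_bag_filling_minimal_bag:
  assumes inst: "goods_bag_filling_instance w \<mu> A S R" and "j \<in> A"
    and "X \<subseteq> S" "card X \<le> 1" "T \<subseteq> R - S"
    and minimal: "\<And>t. t \<in> T \<Longrightarrow> 3 * sum (w j) (X \<union> (T - {t})) < 2 * \<mu> j"
  shows "sum (w j) (X \<union> T) \<le> \<mu> j"
proof -
  have R: "finite R" "S \<subseteq> R"
    and w: "0 \<le> \<mu> j" "\<And>x. x \<in> R \<Longrightarrow> 3 * w j x < 2 * \<mu> j" "\<And>x. x \<in> R - S \<Longrightarrow> 3 * w j x < \<mu> j"
    using inst assms(2) unfolding goods_bag_filling_instance_def by auto
  show ?thesis
  proof (cases "T = {}")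
    case True
    have "w j x \<le> 2 * \<mu> j / 3" if "x \<in> X" for x
      using w(2)[of x] that R(2) assms(3) by auto
    then have "sum (w j) X \<le> real (card X) * (2 * \<mu> j / 3)"
      by (rule sum_bounded_above)
    also have "\<dots> \<le> 1 * (2 * \<mu> j / 3)"
      using assms(4) w(1) by (intro mult_right_mono) auto
    finally show ?thesis
      using True w(1) by simp
  next
    case False
    then obtain t where t: "t \<in> T"
      by blast
    have "X \<union> T = insert t (X \<union> (T - {t}))" "t \<notin> X \<union> (T - {t})"
      using t assms(3,5) by blast+
    moreover have "finite (X \<union> (T - {t}))"
      using R assms(3,5) by (meson finite_Diff finite_Un finite_subset)
    ultimately show ?thesis
      using minimal[OF t] w(3)[of t] t assms(5) by auto
  qed
qed

lemma goods_bag_filling_step: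
  assumes inst: "goods_bag_filling_instance w \<mu> A S R" and "finite A" "A \<noteq> {}"
  shows "\<exists>i\<in>A. \<exists>B\<subseteq>R. 2 * \<mu> i \<le> 3 * sum (w i) B \<and>
           goods_bag_filling_instance w \<mu> (A - {i}) (S - B) (R - B)"
proof -
  have R: "finite R" "S \<subseteq> R" "card S \<le> card A"
    using inst unfolding goods_bag_filling_instance_def by auto
  obtain X where X: "X \<subseteq> S" "card X \<le> 1" "card (S - X) < card A"
  proof (cases "S = {}")
    case True
    then show ?thesis
      using that[of "{}"] assms(2,3) by (simp add: card_gt_0_iff)
  next
    case False
    then obtain s where "s \<in> S"
      by blast
    then show ?thesis
      using that[of "{s}"] R finite_subset[OF R(2,1)] card_Diff1_less[of S s] by simp
  qed
  define bags where "bags = {T. T \<subseteq> R - S \<and> (\<exists>i\<in>A. 2 * \<mu> i \<le> 3 * sum (w i) (X \<union> T))}"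
  have "R - S \<in> bags"
    using goods_bag_filling_first_bag[OF inst _ X(1,3)] assms(3) unfolding bags_def by blast
  then obtain T where T: "T \<in> bags" and T_min: "\<And>T'. T' \<in> bags \<Longrightarrow> card T \<le> card T'"
    using ex_has_least_nat[of "\<lambda>T. T \<in> bags" "R - S" card] by blast
  then obtain i where i: "i \<in> A" "2 * \<mu> i \<le> 3 * sum (w i) (X \<union> T)" and TR: "T \<subseteq> R - S"
    unfolding bags_def by blast
  have "T - {t} \<notin> bags" if "t \<in> T" for t
    using T_min[of "T - {t}"] that finite_subset[OF TR] R(1) by (meson card_Diff1_less finite_Diff leD)
  then have "sum (w j) (X \<union> T) \<le> \<mu> j" if "j \<in> A" for j
    using goods_bag_filling_minimal_bag[OF inst that X(1,2) TR] TR that unfolding bags_def by force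
  moreover have "S - (X \<union> T) = S - X" and XT: "X \<union> T \<subseteq> R"
    using TR X(1) R(2) by blast+
  ultimately have "goods_bag_filling_instance w \<mu> (A - {i}) (S - (X \<union> T)) (R - (X \<union> T))"
    using goods_bag_filling_instance_remove[OF inst assms(2) i(1) XT] X(3) by simp
  then show ?thesis
    using i XT by blast
qed

definition ordered_mms_instance ::
    "(nat \<Rightarrow> 'b::linorder \<Rightarrow> real) \<Rightarrow> (nat \<Rightarrow> real) \<Rightarrow> nat set \<Rightarrow> 'b set \<Rightarrow> bool" where
  "ordered_mms_instance w \<mu> A R \<longleftrightarrow> finite R \<and>
     (\<forall>j\<in>A. 0 \<le> \<mu> j \<and> antimono_on R (w j) \<and> (\<forall>x\<in>R. 0 \<le> w j x) \<and>
        disjoint_bundles (w j) (\<mu> j) (card A) R)"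

lemma ordered_mms_instance_remove:
  assumes inst: "ordered_mms_instance w \<mu> A R" and "finite A" "i \<in> A" "B \<subseteq> C" "C \<subseteq> R"
    and "card A * (card B - 1) < card C"
    and "\<And>j a b. j \<in> A \<Longrightarrow> a \<in> C - B \<Longrightarrow> b \<in> B \<Longrightarrow> w j b \<le> w j a"
  shows "ordered_mms_instance w \<mu> (A - {i}) (R - B)"
proof -
  have card: "card A = Suc (card (A - {i}))"
    using assms(2,3) by (rule card_Suc_Diff1[symmetric])
  have "disjoint_bundles (w j) (\<mu> j) (card (A - {i})) (R - B)" if j: "j \<in> A" for j
    using inst j card assms(4-7) unfolding ordered_mms_instance_def
    by (intro disjoint_bundles_remove[of R "w j" "\<mu> j" _ B C]) auto
  then show ?thesis
    using inst unfolding ordered_mms_instance_def by (auto intro: monotone_on_subset)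
qed

lemma ordered_mms_instance_remove_pair:
  fixes w :: "nat \<Rightarrow> 'b::linorder \<Rightarrow> real" and R :: "'b set"
  defines "xs \<equiv> sorted_list_of_set R"
  assumes inst: "ordered_mms_instance w \<mu> A R" and "finite A" "i \<in> A" "card A < card R"
  shows "xs ! (card A - 1) \<noteq> xs ! card A" "{xs ! (card A - 1), xs ! card A} \<subseteq> R"
    and "ordered_mms_instance w \<mu> (A - {i}) (R - {xs ! (card A - 1), xs ! card A})"
proof -
  let ?K = "card A" and ?B = "{xs ! (card A - 1), xs ! card A}" and ?C = "set (take (Suc (card A)) xs)"
  have R: "finite R" "set xs = R" "sorted xs" "distinct xs" "length xs = card R"
    using inst unfolding xs_def ordered_mms_instance_def by simp_all
  have K: "1 \<le> ?K"
    using assms(3,4) by (auto simp: Suc_le_eq card_gt_0_iff)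
  have "xs ! p \<in> ?C" if "p \<le> ?K" for p
  proof -
    have "p < length (take (Suc ?K) xs)"
      using that assms(5) R(5) by simp
    then show ?thesis
      using that by (metis nth_mem nth_take le_imp_less_Suc)
  qed
  then have BC: "?B \<subseteq> ?C"
    by simp
  have CR: "?C \<subseteq> R"
    using R(2) by (meson set_take_subset)
  then show "?B \<subseteq> R"
    using BC by blast
  show "xs ! (?K - 1) \<noteq> xs ! ?K"
    using K assms(5) R(4,5) by (simp add: nth_eq_iff_index_eq)
  then have "card ?B = 2"
    by simp
  moreover have "card ?C = Suc ?K"
    using R(4,5) assms(5) by (simp add: distinct_card)
  moreover have "w j b \<le> w j a" if j: "j \<in> A" and a: "a \<in> ?C - ?B" and b: "b \<in> ?B" for j a b
  proof -
    obtain p where p: "p < Suc ?K" "p < length xs" "a = xs ! p"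
      using a by (auto simp: in_set_conv_nth)
    then have "p < ?K - 1"
      using a by (cases "p = ?K - 1 \<or> p = ?K") auto
    then have "a \<le> b"
      using b p R(3,5) assms(5) by (auto intro: sorted_nth_mono)
    moreover have "a \<in> R" "b \<in> R"
      using a b BC CR by blast+
    ultimately show ?thesis
      using inst j unfolding ordered_mms_instance_def monotone_on_def by blast
  qed
  ultimately show "ordered_mms_instance w \<mu> (A - {i}) (R - ?B)"
    using ordered_mms_instance_remove[OF inst assms(3,4) BC CR] by simp
qed

lemma ordered_mms_instance_bag_filling:
  fixes w :: "nat \<Rightarrow> 'b::linorder \<Rightarrow> real" and R :: "'b set"
  defines "xs \<equiv> sorted_list_of_set R"
  assumes inst: "ordered_mms_instance w \<mu> A R"
    and item: "\<And>j x. j \<in> A \<Longrightarrow> x \<in> R \<Longrightarrow> 3 * w j x < 2 * \<mu> j"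
    and pair: "\<And>j. j \<in> A \<Longrightarrow> card A < card R \<Longrightarrow>
                 3 * (w j (xs ! (card A - 1)) + w j (xs ! card A)) < 2 * \<mu> j"
  shows "goods_bag_filling_instance w \<mu> A (set (take (card A) xs)) R"
proof -
  let ?K = "card A"
  have R: "finite R" "set xs = R" "sorted xs" "length xs = card R"
    using inst unfolding xs_def ordered_mms_instance_def by simp_all
  have w: "\<And>j. j \<in> A \<Longrightarrow> 0 \<le> \<mu> j \<and> antimono_on R (w j) \<and> (\<forall>x\<in>R. 0 \<le> w j x) \<and>
             disjoint_bundles (w j) (\<mu> j) ?K R"
    using inst unfolding ordered_mms_instance_def by blast
  have small: "3 * w j x < \<mu> j" if j: "j \<in> A" and x: "x \<in> R - set (take ?K xs)" for j x
  proof -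
    obtain q where q: "q < length xs" "x = xs ! q"
      using x R(2) by (auto simp: in_set_conv_nth)
    have "\<not> q < ?K"
      using x q by (auto simp: in_set_conv_nth)
    then have K: "?K < card R" "?K \<le> q"
      using q(1) R(4) by auto
    have mono: "w j (xs ! b) \<le> w j (xs ! a)" if "a \<le> b" "b < card R" for a b
    proof -
      have "xs ! a \<le> xs ! b" "xs ! a \<in> R" "xs ! b \<in> R"
        using that R(2-4) sorted_nth_mono[of xs a b] by auto
      then show ?thesis
        using w[OF j] unfolding monotone_on_def by blast
    qed
    have "w j x \<le> w j (xs ! ?K)" "w j (xs ! ?K) \<le> w j (xs ! (?K - 1))"
      using mono[of ?K q] mono[of "?K - 1" ?K] q K R(4) by auto
    then show ?thesis
      using pair[OF j K(1)] by argo
  qed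
  have "real ?K * \<mu> j \<le> sum (w j) R" if "j \<in> A" for j
    using disjoint_bundles_sum_le[OF R(1)] w[OF that] by blast
  moreover have "set (take ?K xs) \<subseteq> R" "card (set (take ?K xs)) \<le> ?K"
    using R(2) by (auto simp: card_length[THEN le_trans] dest: in_set_takeD)
  ultimately show ?thesis
    unfolding goods_bag_filling_instance_def using R(1) w item small by (auto simp: less_imp_le)
qed

lemma ordered_mms_instance_step:
  assumes ord: "ordered_mms_instance w \<mu> A R" and A: "finite A" "A \<noteq> {}"
  shows "\<exists>i\<in>A. \<exists>B\<subseteq>R. 2 * \<mu> i \<le> 3 * sum (w i) B \<and>
           (ordered_mms_instance w \<mu> (A - {i}) (R - B) \<or>
            (\<exists>S. goods_bag_filling_instance w \<mu> (A - {i}) S (R - B)))"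
proof -
  let ?xs = "sorted_list_of_set R" and ?K = "card A"
  consider (item) i g where "i \<in> A" "g \<in> R" "2 * \<mu> i \<le> 3 * w i g"
    | (pair) i where "i \<in> A" "?K < card R" "2 * \<mu> i \<le> 3 * (w i (?xs ! (?K - 1)) + w i (?xs ! ?K))"
    | (neither) "\<And>j x. j \<in> A \<Longrightarrow> x \<in> R \<Longrightarrow> 3 * w j x < 2 * \<mu> j"
        "\<And>j. j \<in> A \<Longrightarrow> ?K < card R \<Longrightarrow> 3 * (w j (?xs ! (?K - 1)) + w j (?xs ! ?K)) < 2 * \<mu> j"
    by (meson not_le)
  then show ?thesis
  proof cases
    case item
    then have "ordered_mms_instance w \<mu> (A - {i}) (R - {g})"
      using ordered_mms_instance_remove[OF ord A(1), of i "{g}" "{g}"] by simp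
    moreover have "{g} \<subseteq> R" "2 * \<mu> i \<le> 3 * sum (w i) {g}"
      using item by simp_all
    ultimately show ?thesis
      using item(1) by blast
  next
    case pair
    note pair_removed = ordered_mms_instance_remove_pair[OF ord A(1) pair(1,2)]
    have "2 * \<mu> i \<le> 3 * sum (w i) {?xs ! (?K - 1), ?xs ! ?K}"
      using pair(3) pair_removed(1) by simp
    then show ?thesis
      using pair(1) pair_removed(2,3) by blast
  next
    case neither
    then show ?thesis
      using goods_bag_filling_step[OF ordered_mms_instance_bag_filling[OF ord] A] by blast
  qed
qed

lemma ordered_goods_allocation:
  assumes "ordered_mms_instance w \<mu> A R" "finite A" "A \<noteq> {}"
  shows "\<exists>f. allocation f A R \<and> (\<forall>i\<in>A. 2 * \<mu> i \<le> 3 * sum (w i) (f i))"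
proof (rule greedy_allocation[OF assms(2,3), where P =
      "\<lambda>A R. ordered_mms_instance w \<mu> A R \<or> (\<exists>S. goods_bag_filling_instance w \<mu> A S R)"])
  fix i R
  assume "ordered_mms_instance w \<mu> {i} R \<or> (\<exists>S. goods_bag_filling_instance w \<mu> {i} S R)"
  then have "\<mu> i \<le> sum (w i) R" "0 \<le> \<mu> i"
    unfolding ordered_mms_instance_def goods_bag_filling_instance_def
    using disjoint_bundles_sum_le[of R "w i" "\<mu> i" 1] by auto
  then show "2 * \<mu> i \<le> 3 * sum (w i) R"
    by linarith
next
  fix A R
  assume inst: "ordered_mms_instance w \<mu> A R \<or> (\<exists>S. goods_bag_filling_instance w \<mu> A S R)"
    and A: "finite A" "2 \<le> card A"
  then have "A \<noteq> {}"
    by auto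
  from inst show "\<exists>i\<in>A. \<exists>B\<subseteq>R. 2 * \<mu> i \<le> 3 * sum (w i) B \<and>
          (ordered_mms_instance w \<mu> (A - {i}) (R - B) \<or>
           (\<exists>S. goods_bag_filling_instance w \<mu> (A - {i}) S (R - B)))"
  proof (elim disjE exE)
    assume "ordered_mms_instance w \<mu> A R"
    then show ?thesis
      using ordered_mms_instance_step A(1) \<open>A \<noteq> {}\<close> by blast
  next
    fix S
    assume "goods_bag_filling_instance w \<mu> A S R"
    then show ?thesis
      using goods_bag_filling_step[of w \<mu> A S R] A(1) \<open>A \<noteq> {}\<close> by blast
  qed
qed (use assms(1) in blast)

section \<open>Picking sequences\<close>

lemma decreasing_enumeration:
  fixes g :: "'a \<Rightarrow> real"
  assumes "finite M"
  obtains \<sigma> where "bij_betw \<sigma> {..<card M} M" "antimono_on {..<card M} (g \<circ> \<sigma>)"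
proof -
  obtain ys where ys: "set ys = M" "distinct ys"
    using finite_distinct_list[OF assms] by blast
  define xs where "xs = sort_key (\<lambda>x. - g x) ys"
  have xs: "set xs = M" "distinct xs" "length xs = card M" "sorted (map (\<lambda>x. - g x) xs)"
    using ys distinct_card[of ys] by (simp_all add: xs_def)
  have "bij_betw ((!) xs) {..<card M} M"
    using xs by (intro bij_betw_nth) simp_all
  moreover have "antimono_on {..<card M} (g \<circ> (!) xs)"
  proof (rule monotone_onI)
    fix a b assume "a \<in> {..<card M}" "b \<in> {..<card M}" "a \<le> b"
    then have "map (\<lambda>x. - g x) xs ! a \<le> map (\<lambda>x. - g x) xs ! b"
      using xs(3,4) by (intro sorted_nth_mono) auto
    then show "(g \<circ> (!) xs) b \<le> (g \<circ> (!) xs) a"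
      using \<open>a \<in> {..<card M}\<close> \<open>b \<in> {..<card M}\<close> xs(3) by simp
  qed
  ultimately show ?thesis
    using that by blast
qed

lemma greedy_distinct_representatives:
  assumes "\<And>a. a < n \<Longrightarrow> finite (X a) \<and> a < card (X a)"
  shows "\<exists>p. inj_on p {..<n} \<and> (\<forall>a<n. p a \<in> X a)"
  using assms
proof (induction n)
  case 0
  then show ?case
    by simp
next
  case (Suc n)
  then obtain p where p: "inj_on p {..<n}" "\<forall>a<n. p a \<in> X a"
    by force
  have "card (p ` {..<n}) < card (X n)"
    using Suc.prems[of n] card_image_le[of "{..<n}" p] by simp
  then obtain x where x: "x \<in> X n" "x \<notin> p ` {..<n}"
    by (meson card_mono finite_imageI finite_lessThan not_le subsetI)
  have "inj_on (p(n := x)) {..<Suc n}"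
    using p(1) x(2) by (simp add: lessThan_Suc inj_on_fun_updI)
  moreover have "\<forall>a<Suc n. (p(n := x)) a \<in> X a"
    using p(2) x(1) by (simp add: less_Suc_eq)
  ultimately show ?case
    by blast
qed

lemma picking_sequence_allocation:
  fixes u :: "nat \<Rightarrow> 'a \<Rightarrow> real"
  assumes "finite M" and T: "allocation T I {..<card M}"
    and \<sigma>: "\<And>i. i \<in> I \<Longrightarrow> bij_betw (\<sigma> i) {..<card M} M"
    and mono: "\<And>i. i \<in> I \<Longrightarrow> antimono_on {..<card M} (u i \<circ> \<sigma> i)"
  shows "\<exists>S. allocation S I M \<and> (\<forall>i\<in>I. sum (u i \<circ> \<sigma> i) (T i) \<le> sum (u i) (S i))"
proof -
  let ?m = "card M"
  obtain owner where owner: "\<And>a. a < ?m \<Longrightarrow> owner a \<in> I \<and> a \<in> T (owner a)"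
    and owner_eq: "\<And>i a. i \<in> I \<Longrightarrow> a \<in> T i \<Longrightarrow> owner a = i"
    using allocation_owner[OF T] by (metis lessThan_iff)
  (* At step a the owner of position a takes one of its a+1 favourite items not taken before. *)
  define X where "X a = \<sigma> (owner a) ` {..a}" for a
  have X: "finite (X a) \<and> a < card (X a)" "X a \<subseteq> M" if "a < ?m" for a
  proof -
    have "inj_on (\<sigma> (owner a)) {..a}" "\<sigma> (owner a) ` {..a} \<subseteq> M"
      using \<sigma>[of "owner a"] owner[OF that] that unfolding bij_betw_def
      by (auto intro: inj_on_subset)
    then show "finite (X a) \<and> a < card (X a)" "X a \<subseteq> M"
      unfolding X_def by (simp_all add: card_image)
  qed
  then obtain p where p: "inj_on p {..<?m}" "\<And>a. a < ?m \<Longrightarrow> p a \<in> X a"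
    using greedy_distinct_representatives[of ?m X] by blast
  have "p ` {..<?m} \<subseteq> M"
    using p(2) X(2) by blast
  then have p_onto: "p ` {..<?m} = M"
    using p(1) assms(1) by (simp add: card_image card_subset_eq)
  have better: "u i (\<sigma> i a) \<le> u i (p a)" if "i \<in> I" "a \<in> T i" for i a
  proof -
    have a: "a < ?m" "owner a = i"
      using allocation_subset[OF T that(1)] that owner_eq by auto
    then obtain b where "b \<le> a" "p a = \<sigma> i b"
      using p(2)[OF a(1)] unfolding X_def by auto
    then show ?thesis
      using mono[OF that(1)] a(1) unfolding monotone_on_def by auto
  qed
  have "allocation (\<lambda>i. p ` T i) I M"
    using allocation_image[OF T p(1)] p_onto by simp
  moreover have "sum (u i \<circ> \<sigma> i) (T i) \<le> sum (u i) (p ` T i)" if i: "i \<in> I" for i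
  proof -
    have "sum (u i \<circ> \<sigma> i) (T i) \<le> sum (u i \<circ> p) (T i)"
      using better[OF i] by (intro sum_mono) simp
    also have "\<dots> = sum (u i) (p ` T i)"
      using inj_on_subset[OF p(1) allocation_subset[OF T i]] by (simp add: sum.reindex)
    finally show ?thesis .
  qed
  ultimately show ?thesis
    by blast
qed

section \<open>Approximate maximin allocations\<close>

lemma max_min_solvable_two_thirds:
  assumes fin: "finite M" and N: "N \<ge> 1" and "nonneg_instance M N u"
  shows "max_min_solvable (2/3) M N u"
proof -
  let ?m = "card M"
  define \<mu> where "\<mu> i = MmS (u i) N M" for i
  have u: "\<And>i x. i \<in> {1..N} \<Longrightarrow> x \<in> M \<Longrightarrow> 0 \<le> u i x"
    using assms(3) unfolding nonneg_instance_def by blast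
  have "\<forall>i. \<exists>\<sigma>. bij_betw \<sigma> {..<?m} M \<and> antimono_on {..<?m} (u i \<circ> \<sigma>)"
    using decreasing_enumeration[OF fin] by metis
  then obtain \<sigma> where \<sigma>: "\<And>i. bij_betw (\<sigma> i) {..<?m} M" "\<And>i. antimono_on {..<?m} (u i \<circ> \<sigma> i)"
    by metis
  have "ordered_mms_instance (\<lambda>i. u i \<circ> \<sigma> i) \<mu> {1..N} {..<?m}"
    unfolding ordered_mms_instance_def
  proof (intro conjI ballI)
    fix j assume j: "j \<in> {1..N}"
    show "0 \<le> \<mu> j"
      unfolding \<mu>_def using MmS_nonneg[OF fin N] u[OF j] by blast
    show "antimono_on {..<?m} (u j \<circ> \<sigma> j)"
      by (rule \<sigma>(2))
    show "0 \<le> (u j \<circ> \<sigma> j) x" if "x \<in> {..<?m}" for x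
      using u[OF j] \<sigma>(1)[of j] that by (auto simp: bij_betw_def)
    show "disjoint_bundles (u j \<circ> \<sigma> j) (\<mu> j) (card {1..N}) {..<?m}"
      unfolding \<mu>_def using disjoint_bundles_bij_betw[OF \<sigma>(1) MmS_disjoint_bundles[OF fin N]] by simp
  qed simp
  then obtain T where T: "allocation T {1..N} {..<?m}"
    "\<And>i. i \<in> {1..N} \<Longrightarrow> 2 * \<mu> i \<le> 3 * sum (u i \<circ> \<sigma> i) (T i)"
    using ordered_goods_allocation[of _ \<mu> "{1..N}"] N by force
  obtain S where S: "allocation S {1..N} M"
    "\<And>i. i \<in> {1..N} \<Longrightarrow> sum (u i \<circ> \<sigma> i) (T i) \<le> sum (u i) (S i)"
    using picking_sequence_allocation[OF fin T(1), of \<sigma> u] \<sigma> by blast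
  have "\<forall>i\<in>{1..N}. 2/3 * MmS (u i) N M \<le> sum (u i) ((\<lambda>j. if j \<in> {1..N} then S j else {}) i)"
    using T(2) S(2) unfolding \<mu>_def by fastforce
  then show ?thesis
    unfolding max_min_solvable_def solves_max_min_def using allocation_in_partitions[OF S(1)] by blast
qed

definition chores_bag_filling_instance ::
    "(nat \<Rightarrow> 'b \<Rightarrow> real) \<Rightarrow> (nat \<Rightarrow> real) \<Rightarrow> nat set \<Rightarrow> 'b set \<Rightarrow> bool" where
  "chores_bag_filling_instance c m A R \<longleftrightarrow> finite R \<and>
     (\<forall>j\<in>A. 0 \<le> m j \<and> (\<forall>x\<in>R. 0 \<le> c j x \<and> c j x \<le> m j) \<and> sum (c j) R \<le> real (card A) * m j)"

lemma chores_bag_filling_step: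
  assumes inst: "chores_bag_filling_instance c m A R" and A: "finite A" "A \<noteq> {}"
  shows "\<exists>i\<in>A. \<exists>B\<subseteq>R. sum (c i) B \<le> 2 * m i \<and> chores_bag_filling_instance c m (A - {i}) (R - B)"
proof -
  have R: "finite R"
    and c: "\<And>j. j \<in> A \<Longrightarrow> 0 \<le> m j \<and> (\<forall>x\<in>R. 0 \<le> c j x \<and> c j x \<le> m j) \<and> sum (c j) R \<le> real (card A) * m j"
    using inst unfolding chores_bag_filling_instance_def by blast+
  define bags where "bags = {B. B \<subseteq> R \<and> (\<forall>j\<in>A. m j < sum (c j) B)}"
  show ?thesis
  proof (cases "bags = {}")
    case True
    then obtain i where i: "i \<in> A" "sum (c i) R \<le> m i"
      unfolding bags_def by force
    moreover have "chores_bag_filling_instance c m (A - {i}) (R - R)"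
      using c unfolding chores_bag_filling_instance_def by simp
    ultimately show ?thesis
      using c[OF i(1)] by (intro bexI[OF _ i(1)] exI[of _ R]) auto
  next
    case False
    then obtain B where B: "B \<in> bags" and B_min: "\<And>B'. B' \<in> bags \<Longrightarrow> card B \<le> card B'"
      using ex_has_least_nat[of "\<lambda>B. B \<in> bags" _ card] by blast
    have BR: "B \<subseteq> R" and B_big: "\<And>j. j \<in> A \<Longrightarrow> m j < sum (c j) B"
      using B unfolding bags_def by blast+
    have finB: "finite B"
      using BR R finite_subset by blast
    obtain j where "j \<in> A"
      using A(2) by blast
    then have "B \<noteq> {}"
      using B_big[of j] c[of j] by force
    then obtain e where e: "e \<in> B"
      by blast
    have "B - {e} \<notin> bags"
      using B_min[of "B - {e}"] e finB by (meson card_Diff1_less leD)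
    then obtain i where i: "i \<in> A" "sum (c i) (B - {e}) \<le> m i"
      using BR unfolding bags_def by force
    have "sum (c i) B = sum (c i) (B - {e}) + c i e"
      using e finB by (simp add: sum.remove)
    then have "sum (c i) B \<le> 2 * m i"
      using i c[OF i(1)] e BR by fastforce
    moreover have "sum (c j) (R - B) \<le> real (card (A - {i})) * m j" if j: "j \<in> A - {i}" for j
    proof -
      have "sum (c j) (R - B) = sum (c j) R - sum (c j) B"
        using BR R by (simp add: sum_diff)
      also have "\<dots> \<le> real (card A) * m j - m j"
        using c[of j] B_big[of j] j by fastforce
      finally show ?thesis
        unfolding real_card_Diff_singleton[OF A(1) i(1)] by (simp add: left_diff_distrib)
    qed
    ultimately show ?thesis
      using BR R c i(1) unfolding chores_bag_filling_instance_def
      by (intro bexI[OF _ i(1)] exI[of _ B]) auto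
  qed
qed

lemma chores_bag_filling_allocation:
  assumes "chores_bag_filling_instance c m A R" "finite A" "A \<noteq> {}"
  shows "\<exists>f. allocation f A R \<and> (\<forall>i\<in>A. sum (c i) (f i) \<le> 2 * m i)"
proof (rule greedy_allocation[OF assms(2,3), where P = "chores_bag_filling_instance c m"])
  fix i R
  assume "chores_bag_filling_instance c m {i} R"
  then show "sum (c i) R \<le> 2 * m i"
    unfolding chores_bag_filling_instance_def by simp
next
  fix A R
  assume "chores_bag_filling_instance c m A R" "finite A" "2 \<le> card A"
  then show "\<exists>i\<in>A. \<exists>B\<subseteq>R. sum (c i) B \<le> 2 * m i \<and> chores_bag_filling_instance c m (A - {i}) (R - B)"
    using chores_bag_filling_step[of c m A R] by fastforce
qed (rule assms(1))

lemma max_min_solvable_two: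
  assumes fin: "finite M" and N: "N \<ge> 1" and "nonpos_instance M N d"
  shows "max_min_solvable 2 M N d"
proof -
  define m where "m i = - MmS (d i) N M" for i
  have d: "\<And>i x. i \<in> {1..N} \<Longrightarrow> x \<in> M \<Longrightarrow> d i x \<le> 0"
    using assms(3) unfolding nonpos_instance_def by blast
  have "0 \<le> m j \<and> (\<forall>x\<in>M. 0 \<le> - d j x \<and> - d j x \<le> m j) \<and>
      sum (\<lambda>x. - d j x) M \<le> real (card {1..N}) * m j" if j: "j \<in> {1..N}" for j
  proof -
    have "0 \<le> m j"
      unfolding m_def using MmS_nonpos[OF fin N d[OF j]] by simp
    moreover have "\<forall>x\<in>M. 0 \<le> - d j x \<and> - d j x \<le> m j"
      unfolding m_def using d[OF j] MmS_le_item[OF fin N d[OF j]] by fastforce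
    moreover have "sum (\<lambda>x. - d j x) M \<le> real (card {1..N}) * m j"
      unfolding m_def using MmS_le_average[OF fin N, of "d j"] by (simp add: sum_negf)
    ultimately show ?thesis
      by blast
  qed
  then have "chores_bag_filling_instance (\<lambda>i x. - d i x) m {1..N} M"
    unfolding chores_bag_filling_instance_def using fin by blast
  then obtain f where f: "allocation f {1..N} M" "\<And>i. i \<in> {1..N} \<Longrightarrow> sum (\<lambda>x. - d i x) (f i) \<le> 2 * m i"
    using chores_bag_filling_allocation[of _ m "{1..N}" M] N by force
  have "\<forall>i\<in>{1..N}. 2 * MmS (d i) N M \<le> sum (d i) ((\<lambda>j. if j \<in> {1..N} then f j else {}) i)"
    using f(2) unfolding m_def by (simp add: sum_negf)
  then show ?thesis
    unfolding max_min_solvable_def solves_max_min_def using allocation_in_partitions[OF f(1)] by blast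
qed

lemma max_min_solvable_if_all_MmS_zero:
  assumes "finite M" "N \<ge> 1" "\<And>i. i \<in> {1..N} \<Longrightarrow> MmS (u i) N M = 0"
    and "\<And>i x. i \<in> {1..N} \<Longrightarrow> x \<in> M \<Longrightarrow> 0 \<le> u i x"
  shows "max_min_solvable r M N u"
proof -
  let ?S = "\<lambda>j. if j = 1 then M else {}"
  have "\<forall>i\<in>{1..N}. r * MmS (u i) N M \<le> sum (u i) (?S i)"
    using assms(3,4) by (simp add: sum_nonneg)
  then show ?thesis
    unfolding max_min_solvable_def solves_max_min_def
    using all_to_one_in_partitions[of 1 N M] assms(2) by auto
qed

lemma max_min_solvable_0_if_MmS_zero:
  assumes "finite M" "N \<ge> 1" "i \<in> {1..N}" "MmS (d i) N M = 0"
  shows "max_min_solvable 0 M N d"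
proof -
  let ?S = "\<lambda>j. if j = i then M else {}"
  have "0 \<le> sum (d i) M"
    using MmS_le_average[OF assms(1,2), of "d i"] assms(4) by simp
  then have "\<forall>j\<in>{1..N}. 0 * MmS (d j) N M \<le> sum (d j) (?S j)"
    by simp
  then show ?thesis
    unfolding max_min_solvable_def solves_max_min_def using all_to_one_in_partitions[OF assms(3)] by blast
qed

section \<open>Optimal ratios\<close>

lemma scaled_le_iff_le_Min:
  fixes \<mu> s :: "nat \<Rightarrow> real"
  assumes "finite I" "i\<^sub>0 \<in> I" "0 < \<mu> i\<^sub>0"
    and "\<And>i. i \<in> I \<Longrightarrow> 0 \<le> \<mu> i" "\<And>i. i \<in> I \<Longrightarrow> 0 \<le> s i"
  shows "(\<forall>i\<in>I. r * \<mu> i \<le> s i) \<longleftrightarrow> r \<le> Min ((\<lambda>i. s i / \<mu> i) ` {i\<in>I. 0 < \<mu> i})"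
proof -
  have "(\<forall>i\<in>I. r * \<mu> i \<le> s i) \<longleftrightarrow> (\<forall>i\<in>{i\<in>I. 0 < \<mu> i}. r * \<mu> i \<le> s i)"
    using assms(4,5) by (metis (mono_tags, lifting) mem_Collect_eq mult_zero_right order_le_less)
  also have "\<dots> \<longleftrightarrow> r \<le> Min ((\<lambda>i. s i / \<mu> i) ` {i\<in>I. 0 < \<mu> i})"
    using assms(1-3) by (subst Min_ge_iff) (auto simp: pos_le_divide_eq)
  finally show ?thesis .
qed

lemma scaled_le_iff_Max_le:
  fixes \<mu> s :: "nat \<Rightarrow> real"
  assumes "finite I" "\<And>i. i \<in> I \<Longrightarrow> \<mu> i \<le> 0"
  shows "(0 \<le> r \<and> (\<forall>i\<in>I. r * \<mu> i \<le> s i)) \<longleftrightarrow>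
    (\<forall>i\<in>I. \<mu> i = 0 \<longrightarrow> 0 \<le> s i) \<and> Max (insert 0 ((\<lambda>i. s i / \<mu> i) ` {i\<in>I. \<mu> i < 0})) \<le> r"
proof -
  have "(\<forall>i\<in>I. r * \<mu> i \<le> s i) \<longleftrightarrow>
      (\<forall>i\<in>I. \<mu> i = 0 \<longrightarrow> 0 \<le> s i) \<and> (\<forall>i\<in>{i\<in>I. \<mu> i < 0}. r * \<mu> i \<le> s i)"
    using assms(2) by (metis (mono_tags, lifting) mem_Collect_eq mult_zero_right order_le_less)
  moreover have "(0 \<le> r \<and> (\<forall>i\<in>{i\<in>I. \<mu> i < 0}. r * \<mu> i \<le> s i)) \<longleftrightarrow>
      Max (insert 0 ((\<lambda>i. s i / \<mu> i) ` {i\<in>I. \<mu> i < 0})) \<le> r"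
    using assms(1) by (auto simp: neg_divide_le_eq)
  ultimately show ?thesis
    by blast
qed

lemma max_min_solvable_nonneg_iff:
  assumes fin: "finite M" and N: "N \<ge> 1" and "nonneg_instance M N u"
    and "i\<^sub>0 \<in> {1..N}" "MmS (u i\<^sub>0) N M \<noteq> 0"
  obtains L where "\<And>r. max_min_solvable r M N u \<longleftrightarrow> r \<le> L"
proof -
  define \<mu> where "\<mu> i = MmS (u i) N M" for i
  define c where "c S = Min ((\<lambda>i. sum (u i) (S i) / \<mu> i) ` {i\<in>{1..N}. 0 < \<mu> i})"
    for S :: "nat \<Rightarrow> 'a set"
  have u: "\<And>i x. i \<in> {1..N} \<Longrightarrow> x \<in> M \<Longrightarrow> 0 \<le> u i x"
    using assms(3) unfolding nonneg_instance_def by blast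
  have \<mu>: "i \<in> {1..N} \<Longrightarrow> 0 \<le> \<mu> i" for i
    unfolding \<mu>_def using MmS_nonneg[OF fin N] u by blast
  have "0 < \<mu> i\<^sub>0"
    using \<mu>[OF assms(4)] assms(5) unfolding \<mu>_def by simp
  have "solves_max_min r M N u S \<longleftrightarrow> S \<in> partitions N M \<and> r \<le> c S" for r S
  proof -
    have "0 \<le> sum (u i) (S i)" if "S \<in> partitions N M" "i \<in> {1..N}" for i
      using u[OF that(2)] partitions_subset[OF that(1)] by (meson subsetD sum_nonneg)
    then have "(\<forall>i\<in>{1..N}. r * \<mu> i \<le> sum (u i) (S i)) \<longleftrightarrow> r \<le> c S" if "S \<in> partitions N M"
      unfolding c_def using assms(4) \<open>0 < \<mu> i\<^sub>0\<close> \<mu> that by (intro scaled_le_iff_le_Min) auto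
    then show ?thesis
      unfolding solves_max_min_def \<mu>_def by (auto simp: mult.commute)
  qed
  moreover have "r \<le> Max (c ` partitions N M) \<longleftrightarrow> (\<exists>S\<in>partitions N M. r \<le> c S)" for r
    using finite_partitions[OF fin] all_to_one_in_partitions[of 1 N M] N by (subst Max_ge_iff) auto
  ultimately have "max_min_solvable r M N u \<longleftrightarrow> r \<le> Max (c ` partitions N M)" for r
    unfolding max_min_solvable_def by blast
  then show ?thesis
    using that by blast
qed

lemma max_min_solvable_nonpos_iff:
  assumes fin: "finite M" and N: "N \<ge> 1" and "nonpos_instance M N d"
    and "0 \<le> r\<^sub>0" "max_min_solvable r\<^sub>0 M N d"
  obtains L where "\<And>r. 0 \<le> r \<and> max_min_solvable r M N d \<longleftrightarrow> L \<le> r"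
proof -
  define \<mu> where "\<mu> i = MmS (d i) N M" for i
  define a where "a S = Max (insert 0 ((\<lambda>i. sum (d i) (S i) / \<mu> i) ` {i\<in>{1..N}. \<mu> i < 0}))"
    for S :: "nat \<Rightarrow> 'a set"
  define V where "V = {S\<in>partitions N M. \<forall>i\<in>{1..N}. \<mu> i = 0 \<longrightarrow> 0 \<le> sum (d i) (S i)}"
  have \<mu>: "i \<in> {1..N} \<Longrightarrow> \<mu> i \<le> 0" for i
    unfolding \<mu>_def using MmS_nonpos[OF fin N] assms(3) unfolding nonpos_instance_def by blast
  have solves: "0 \<le> r \<and> solves_max_min r M N d S \<longleftrightarrow> S \<in> V \<and> a S \<le> r" for r S
    using scaled_le_iff_Max_le[of "{1..N}" \<mu> r "\<lambda>i. sum (d i) (S i)"] \<mu>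
    unfolding solves_max_min_def V_def a_def \<mu>_def by (auto simp: mult.commute)
  have "V \<noteq> {}"
    using assms(4,5) solves unfolding max_min_solvable_def by blast
  moreover have "finite V"
    using finite_partitions[OF fin] unfolding V_def by simp
  ultimately have "Min (a ` V) \<le> r \<longleftrightarrow> (\<exists>S\<in>V. a S \<le> r)" for r
    by (subst Min_le_iff) auto
  then have "0 \<le> r \<and> max_min_solvable r M N d \<longleftrightarrow> Min (a ` V) \<le> r" for r
    using solves unfolding max_min_solvable_def by blast
  then show ?thesis
    using that by blast
qed

lemma opt_ratio_nonneg_eq_infinity:
  "(\<And>r. max_min_solvable r M N u) \<Longrightarrow> opt_ratio_nonneg M N u = \<infinity>"
  unfolding opt_ratio_nonneg_def by (rule Greatest_equality) auto

lemma opt_ratio_nonneg_eq_ereal: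
  assumes "\<And>r. max_min_solvable r M N u \<longleftrightarrow> r \<le> L" "0 \<le> L"
  shows "opt_ratio_nonneg M N u = ereal L"
  unfolding opt_ratio_nonneg_def
proof (rule Greatest_equality)
  fix l :: ereal
  assume l: "0 \<le> l \<and> (l = \<infinity> \<longrightarrow> (\<forall>r. max_min_solvable r M N u)) \<and>
    (l \<noteq> \<infinity> \<longrightarrow> max_min_solvable (real_of_ereal l) M N u)"
  show "l \<le> ereal L"
  proof (cases l)
    case PInf
    then show ?thesis
      using l assms(1)[of "L + 1"] by simp
  qed (use l assms(1) in auto)
qed (use assms in auto)

lemma opt_ratio_nonpos_eq:
  "(\<And>r. 0 \<le> r \<and> max_min_solvable r M N d \<longleftrightarrow> L \<le> r) \<Longrightarrow> opt_ratio_nonpos M N d = L"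
  unfolding opt_ratio_nonpos_def by (rule Least_equality) auto

lemma opt_ratio_nonneg_bounds:
  assumes "finite M" "N \<ge> 1" "nonneg_instance M N u"
  shows "ereal (2/3) \<le> opt_ratio_nonneg M N u"
    and "opt_ratio_nonneg M N u = \<infinity> \<longleftrightarrow> (\<forall>i\<in>{1..N}. MmS (u i) N M = 0)"
proof -
  have "(opt_ratio_nonneg M N u = \<infinity> \<longleftrightarrow> (\<forall>i\<in>{1..N}. MmS (u i) N M = 0)) \<and>
        ereal (2/3) \<le> opt_ratio_nonneg M N u"
  proof (cases "\<forall>i\<in>{1..N}. MmS (u i) N M = 0")
    case True
    then show ?thesis
      using max_min_solvable_if_all_MmS_zero[OF assms(1,2)] assms(3) unfolding nonneg_instance_def
      by (simp add: opt_ratio_nonneg_eq_infinity)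
  next
    case False
    then obtain L where L: "\<And>r. max_min_solvable r M N u \<longleftrightarrow> r \<le> L"
      using max_min_solvable_nonneg_iff[OF assms] by blast
    then have "2/3 \<le> L"
      using max_min_solvable_two_thirds[OF assms] by blast
    then show ?thesis
      using False opt_ratio_nonneg_eq_ereal[OF L] by simp
  qed
  then show "ereal (2/3) \<le> opt_ratio_nonneg M N u"
    and "opt_ratio_nonneg M N u = \<infinity> \<longleftrightarrow> (\<forall>i\<in>{1..N}. MmS (u i) N M = 0)"
    by simp_all
qed

lemma opt_ratio_nonpos_bounds:
  assumes "finite M" "N \<ge> 1" "nonpos_instance M N d"
  shows "0 \<le> opt_ratio_nonpos M N d" "opt_ratio_nonpos M N d \<le> 2"
    and "(\<exists>i\<in>{1..N}. MmS (d i) N M = 0) \<Longrightarrow> opt_ratio_nonpos M N d = 0"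
proof -
  obtain L where L: "\<And>r. 0 \<le> r \<and> max_min_solvable r M N d \<longleftrightarrow> L \<le> r"
    using max_min_solvable_nonpos_iff[OF assms _ max_min_solvable_two[OF assms]] by auto
  then have opt: "opt_ratio_nonpos M N d = L"
    by (rule opt_ratio_nonpos_eq)
  show "0 \<le> opt_ratio_nonpos M N d" "opt_ratio_nonpos M N d \<le> 2"
    using L[of L] L[of 2] max_min_solvable_two[OF assms] opt by auto
  show "opt_ratio_nonpos M N d = 0" if "\<exists>i\<in>{1..N}. MmS (d i) N M = 0"
    using that max_min_solvable_0_if_MmS_zero[OF assms(1,2)] L[of 0] L[of L] opt by force
qed

theorem lemma4:
  fixes M :: "'a set" and N :: nat
    and u :: "nat \<Rightarrow> 'a \<Rightarrow> real" and d :: "nat \<Rightarrow> 'a \<Rightarrow> real"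
  assumes "finite M" and "N \<ge> 1"
  shows "(nonneg_instance M N u \<longrightarrow>
            ereal (2/3) \<le> opt_ratio_nonneg M N u \<and> opt_ratio_nonneg M N u \<le> \<infinity> \<and>
            (opt_ratio_nonneg M N u = \<infinity> \<longleftrightarrow> (\<forall>i\<in>{1..N}. MmS (u i) N M = 0)))
       \<and> (nonpos_instance M N d \<longrightarrow>
            0 \<le> opt_ratio_nonpos M N d \<and> opt_ratio_nonpos M N d \<le> 2 \<and>
            ((\<exists>i\<in>{1..N}. MmS (d i) N M = 0) \<longrightarrow> opt_ratio_nonpos M N d = 0))"
  using opt_ratio_nonneg_bounds[OF assms] opt_ratio_nonpos_bounds[OF assms] by simp

end
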